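(* Let $\mathcal T^{(1)},\mathcal T^{(2)}$ be Galton–Watson trees as below and suppose $\Phi_1\le\Phi_2$, i.e. $\Phi_1(t)\le\Phi_2(t)$ for all $t\in(0,1)$. Then: (a) if $\alpha<0$, then $\mu_1(\alpha)\le\mu_2(\alpha)$; (b) if $0<\alpha<\tfrac12$, then $\mu_1(\alpha)\ge\mu_2(\alpha)$; (c) $\mu_1'\ge\mu_2'$.
   Context: For $j=1,2$, let $\xi_j$ be a random variable with values in $\{0,1,2,\dots\}$ with $\mathbb E\xi_j=1$ and $0<\operatorname{Var}\xi_j<\infty$, with probability generating function $\Phi_j(t)=\mathbb E t^{\xi_j}$, and let $\mathcal T^{(j)}$ be a Galton–Watson tree with offspring distribution $\xi_j$. For real $\alpha<1/2$, $\mu_j(\alpha):=\mathbb E|\mathcal T^{(j)}|^\alpha$ and $\mu_j':=\mathbb E\log|\mathcal T^{(j)}|$, where $|\cdot|$ is the number of vertices. *)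

theory Defs
  imports "HOL-Probability.Probability"
begin

definition pgf :: "nat pmf \<Rightarrow> real \<Rightarrow> real" where
  "pgf p t = (\<Sum>k. pmf p k * t ^ k)"

text \<open>Law of the total size of a Galton--Watson tree, via the branching recursion
  |T| = 1 + |T_1| + ... + |T_xi|, with T_i i.i.d. copies of T independent of xi:
  P(|T| = m+1) = sum_k P(xi = k) * sum over (n_1,..,n_k) with n_i >= 1, sum n_i = m
  of prod_i P(|T| = n_i).  The operator below computes the right-hand side;
  since the value at n only depends on values at indices < n, iterating it
  n+1 times from 0 gives P(|T| = n).\<close>
definition gw_step :: "nat pmf \<Rightarrow> (nat \<Rightarrow> real) \<Rightarrow> nat \<Rightarrow> real" where
  "gw_step p q n = (case n of 0 \<Rightarrow> 0
     | Suc m \<Rightarrow> (\<Sum>k\<le>m. pmf p k *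
          (\<Sum>xs\<in>{xs. length xs = k \<and> sum_list xs = m \<and> (\<forall>x\<in>set xs. 1 \<le> x)}.
              prod_list (map q xs))))"

definition gw_size_prob :: "nat pmf \<Rightarrow> nat \<Rightarrow> real" where
  "gw_size_prob p n = ((gw_step p ^^ Suc n) (\<lambda>_. 0)) n"

definition gw_mu :: "nat pmf \<Rightarrow> real \<Rightarrow> real" where
  "gw_mu p \<alpha> = (\<Sum>n. gw_size_prob p n * real n powr \<alpha>)"

definition gw_mu' :: "nat pmf \<Rightarrow> real" where
  "gw_mu' p = (\<Sum>n. gw_size_prob p n * ln (real n))"

definition critical_finvar :: "nat pmf \<Rightarrow> bool" where
  "critical_finvar p \<longleftrightarrow>
     integrable (measure_pmf p) (\<lambda>k. (real k)^2) \<and>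
     measure_pmf.expectation p real = 1 \<and>
     measure_pmf.variance p real > 0"

end

theory Submission
  imports Defs
begin

text \<open>Let \<open>Y(s) = E s\<^bsup>|T|\<^esup>\<close>. The branching recursion gives \<open>Y(s) = s \<Phi>(Y(s))\<close>, and \<open>Y\<close> is the
  increasing limit of the generating functions of height-truncated trees, which obey the same
  recursion; by induction on the height, \<open>\<Phi>\<^sub>1 \<le> \<Phi>\<^sub>2\<close> gives \<open>Y\<^sub>1 \<le> Y\<^sub>2\<close> on \<open>(0, 1]\<close>.
  Moments of \<open>|T|\<close> are Mellin transforms of \<open>Y(e\<^sup>-\<^sup>x)\<close>: for \<open>\<alpha> < 0\<close>,
  \<open>\<Gamma>(-\<alpha>) E|T|\<^sup>\<alpha> = \<integral>\<^sub>0\<^sup>\<infinity> x\<^sup>-\<^sup>\<alpha>\<^sup>-\<^sup>1 Y(e\<^sup>-\<^sup>x) dx\<close>, and for \<open>0 < \<alpha> < 1/2\<close>,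
  \<open>D(\<alpha>) E|T|\<^sup>\<alpha> = \<integral>\<^sub>0\<^sup>\<infinity> x\<^sup>-\<^sup>\<alpha>\<^sup>-\<^sup>1 (1 - Y(e\<^sup>-\<^sup>x)) dx\<close> with
  \<open>D(\<alpha>) = \<integral>\<^sub>0\<^sup>\<infinity> u\<^sup>-\<^sup>\<alpha>\<^sup>-\<^sup>1 (1 - e\<^sup>-\<^sup>u) du\<close>. The second integral is finite because mean one
  and positive variance force \<open>1 - Y(s) = O(\<surd>(1 - s))\<close>. Monotonicity of the integrands in \<open>Y\<close>
  gives (a) and (b), and (c) follows from (b) because \<open>(E|T|\<^sup>\<alpha> - 1)/\<alpha> \<rightarrow> E log |T|\<close> as
  \<open>\<alpha> \<rightarrow> 0\<^sup>+\<close>.\<close>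

section \<open>The branching operator\<close>

lemma prod_list_map_mono:
  fixes a b :: "'a \<Rightarrow> 'b::linordered_semidom"
  assumes "\<And>x. 0 \<le> a x" and "\<And>x. a x \<le> b x"
  shows "prod_list (map a xs) \<le> prod_list (map b xs)"
  by (induction xs) (auto intro!: mult_mono prod_list_nonneg order_trans[OF assms(1) assms(2)] assms)

definition compositions :: "nat \<Rightarrow> nat \<Rightarrow> nat list set" where
  "compositions k m = {xs. length xs = k \<and> sum_list xs = m \<and> (\<forall>x\<in>set xs. 1 \<le> x)}"

definition composition_sum :: "(nat \<Rightarrow> real) \<Rightarrow> nat \<Rightarrow> nat \<Rightarrow> real" where
  "composition_sum a k m = (\<Sum>xs\<in>compositions k m. prod_list (map a xs))"

lemma gw_step_0 [simp]: "gw_step p a 0 = 0"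
  by (simp add: gw_step_def)

lemma gw_step_Suc: "gw_step p a (Suc m) = (\<Sum>k\<le>m. pmf p k * composition_sum a k m)"
  by (simp add: gw_step_def composition_sum_def compositions_def)

lemma finite_compositions: "finite (compositions k m)"
proof (rule finite_subset)
  show "compositions k m \<subseteq> {xs. set xs \<subseteq> {..m} \<and> length xs = k}"
    unfolding compositions_def using member_le_sum_list by fastforce
qed (simp add: finite_lists_length_eq)

lemma length_le_sum_list: "(\<forall>x\<in>set xs. 1 \<le> (x::nat)) \<Longrightarrow> length xs \<le> sum_list xs"
  by (induction xs) auto

lemma compositions_Suc:
  "compositions (Suc k) m = (\<lambda>(x, xs). x # xs) ` (SIGMA x:{1..m}. compositions k (m - x))"
proof (intro equalityI subsetI)
  fix ys assume "ys \<in> compositions (Suc k) m"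
  then obtain x xs where "ys = x # xs" "length xs = k" "x + sum_list xs = m" "1 \<le> x"
    "\<forall>y\<in>set xs. 1 \<le> y"
    unfolding compositions_def by (cases ys) auto
  then show "ys \<in> (\<lambda>(x, xs). x # xs) ` (SIGMA x:{1..m}. compositions k (m - x))"
    unfolding compositions_def by (auto intro!: image_eqI[of _ _ "(x, xs)"])
qed (auto simp: compositions_def)

lemma composition_sum_0: "composition_sum a 0 m = (if m = 0 then 1 else 0)"
proof -
  have "compositions 0 m = (if m = 0 then {[]} else {})"
    by (auto simp: compositions_def)
  then show ?thesis by (simp add: composition_sum_def)
qed

lemma composition_sum_eq_0:
  assumes "m < k" shows "composition_sum a k m = 0"
proof -
  have "compositions k m = {}"
    unfolding compositions_def using assms length_le_sum_list by fastforce
  then show ?thesis by (simp add: composition_sum_def)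
qed

lemma composition_sum_Suc:
  assumes "a 0 = 0"
  shows "composition_sum a (Suc k) m = (\<Sum>x\<le>m. a x * composition_sum a k (m - x))"
proof -
  have inj: "inj_on (\<lambda>(x, xs). x # xs) (SIGMA x:{1..m}. compositions k (m - x))"
    by (auto simp: inj_on_def)
  have "composition_sum a (Suc k) m
      = (\<Sum>(x, xs)\<in>(SIGMA x:{1..m}. compositions k (m - x)). prod_list (map a (x # xs)))"
    unfolding composition_sum_def compositions_Suc
    by (subst sum.reindex[OF inj]) (simp add: case_prod_unfold)
  also have "\<dots> = (\<Sum>x=1..m. a x * composition_sum a k (m - x))"
    by (subst sum.Sigma[symmetric])
       (auto simp: finite_compositions composition_sum_def sum_distrib_left)
  also have "\<dots> = (\<Sum>x\<le>m. a x * composition_sum a k (m - x))"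
    using assms by (simp add: atMost_atLeast0 sum.atLeast_Suc_atMost)
  finally show ?thesis .
qed

lemma composition_sum_nonneg: "(\<And>n. 0 \<le> a n) \<Longrightarrow> 0 \<le> composition_sum a k m"
  unfolding composition_sum_def by (auto intro!: sum_nonneg prod_list_nonneg)

lemma composition_sum_sums:
  assumes "0 \<le> s" and a: "\<And>n. 0 \<le> a n" and "a 0 = 0" and "(\<lambda>n. a n * s ^ n) sums A"
  shows "(\<lambda>m. composition_sum a k m * s ^ m) sums (A ^ k)"
proof (induction k)
  case 0
  have "(\<lambda>m. composition_sum a 0 m * s ^ m) = (\<lambda>m. if m = 0 then 1 else 0)"
    by (auto simp: composition_sum_0)
  then show ?case using sums_single[of 0 "\<lambda>_. 1::real"] by simp
next
  case (Suc k)
  have "(\<lambda>m. \<Sum>i\<le>m. (a i * s ^ i) * (composition_sum a k (m - i) * s ^ (m - i)))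
      sums ((\<Sum>n. a n * s ^ n) * (\<Sum>m. composition_sum a k m * s ^ m))"
    by (rule Cauchy_product_sums)
       (use assms Suc.IH in \<open>auto simp: sums_iff composition_sum_nonneg\<close>)
  moreover have "(\<Sum>i\<le>m. (a i * s ^ i) * (composition_sum a k (m - i) * s ^ (m - i)))
      = composition_sum a (Suc k) m * s ^ m" for m
  proof -
    have "(a i * s ^ i) * (composition_sum a k (m - i) * s ^ (m - i))
        = (a i * composition_sum a k (m - i)) * s ^ m" if "i \<le> m" for i
      using that by (simp add: mult_ac flip: power_add)
    then show ?thesis
      unfolding composition_sum_Suc[where a=a, OF assms(3)] sum_distrib_right by (intro sum.cong) auto
  qed
  ultimately show ?case using assms(4) Suc.IH by (simp add: sums_iff)
qed

lemma gw_step_nonneg: "(\<And>n. 0 \<le> a n) \<Longrightarrow> 0 \<le> gw_step p a n"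
  by (cases n) (auto simp: gw_step_Suc intro!: sum_nonneg mult_nonneg_nonneg composition_sum_nonneg)

lemma gw_step_mono:
  assumes "\<And>n. 0 \<le> a n" and "\<And>n. a n \<le> b n"
  shows "gw_step p a n \<le> gw_step p b n"
  unfolding gw_step_def using assms
  by (auto split: nat.split intro!: sum_mono mult_left_mono prod_list_map_mono)

lemma gw_step_cong_below:
  assumes "\<And>k. k < n \<Longrightarrow> a k = b k"
  shows "gw_step p a n = gw_step p b n"
proof (cases n)
  case (Suc m)
  have "prod_list (map a xs) = prod_list (map b xs)" if "xs \<in> compositions k m" for xs k
  proof (rule arg_cong[where f = prod_list], rule map_cong)
    fix x assume "x \<in> set xs"
    then have "x < n" using that member_le_sum_list[of x xs] Suc by (auto simp: compositions_def)
    then show "a x = b x" by (rule assms)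
  qed simp
  then show ?thesis by (auto simp: Suc gw_step_Suc composition_sum_def intro!: sum.cong)
qed simp

section \<open>Truncated trees\<close>

text \<open>\<open>gw_approx p j n\<close> is the probability that the tree has \<open>n\<close> vertices and height below \<open>j\<close>.\<close>

definition gw_approx :: "nat pmf \<Rightarrow> nat \<Rightarrow> nat \<Rightarrow> real" where
  "gw_approx p j = (gw_step p ^^ j) (\<lambda>_. 0)"

lemma gw_approx_0 [simp]: "gw_approx p 0 = (\<lambda>_. 0)"
  and gw_approx_Suc [simp]: "gw_approx p (Suc j) = gw_step p (gw_approx p j)"
  by (simp_all add: gw_approx_def)

lemma gw_approx_at_0 [simp]: "gw_approx p j 0 = 0"
  by (cases j) simp_all

lemma gw_approx_nonneg: "0 \<le> gw_approx p j n"
  by (induction j arbitrary: n) (auto intro!: gw_step_nonneg)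

lemma gw_approx_mono:
  assumes "j \<le> j'" shows "gw_approx p j n \<le> gw_approx p j' n"
proof -
  have "gw_approx p j n \<le> gw_approx p (Suc j) n" for j n
    by (induction j arbitrary: n) (auto intro!: gw_step_mono gw_step_nonneg gw_approx_nonneg)
  then show ?thesis using lift_Suc_mono_le[of "\<lambda>j. gw_approx p j n"] assms by blast
qed

lemma gw_approx_stable:
  assumes "n < j" and "j \<le> j'"
  shows "gw_approx p j' n = gw_approx p j n"
proof -
  have Suc_eq: "gw_approx p (Suc j) n = gw_approx p j n" if "n < j" for j n
    using that by (induction j arbitrary: n) (auto intro!: gw_step_cong_below)
  from assms(2) show ?thesis
  proof (induction j' rule: dec_induct)
    case (step j')
    then show ?case using Suc_eq[of n j'] assms(1) by simp
  qed simp
qed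

lemma gw_approx_eq_size_prob: "n < j \<Longrightarrow> gw_approx p j n = gw_size_prob p n"
  using gw_approx_stable[of n "Suc n" j p] gw_approx_stable[of n j "Suc n" p]
  by (cases "Suc n \<le> j") (auto simp: gw_size_prob_def gw_approx_def)

lemma gw_approx_le_size_prob: "gw_approx p j n \<le> gw_size_prob p n"
  using gw_approx_mono[of j "max j (Suc n)" p n] gw_approx_eq_size_prob[of n "max j (Suc n)" p]
  by simp

lemma gw_size_prob_nonneg: "0 \<le> gw_size_prob p n"
  using gw_approx_eq_size_prob[of n "Suc n" p] gw_approx_nonneg[of p "Suc n" n] by simp

lemma gw_size_prob_0 [simp]: "gw_size_prob p 0 = 0"
  using gw_approx_eq_size_prob[of 0 1 p] by simp

section \<open>Generating functions\<close>

lemma suminf_swap_ennreal: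
  fixes f :: "nat \<Rightarrow> nat \<Rightarrow> ennreal"
  shows "(\<Sum>m. \<Sum>k. f m k) = (\<Sum>k. \<Sum>m. f m k)"
proof -
  have "(\<Sum>m. \<Sum>k. f m k) = (\<integral>\<^sup>+m. (\<Sum>k. f m k) \<partial>count_space UNIV)"
    by (simp add: nn_integral_count_space_nat)
  also have "\<dots> = (\<Sum>k. \<integral>\<^sup>+m. f m k \<partial>count_space UNIV)"
    by (rule nn_integral_suminf) simp
  finally show ?thesis by (simp add: nn_integral_count_space_nat)
qed

lemma ennreal_suminf_eq_imp_sums:
  assumes "\<And>i. 0 \<le> f i" and "(\<Sum>i. ennreal (f i)) = ennreal x" and "0 \<le> x"
  shows "f sums x"
  using summable_sums[OF summableI, of "\<lambda>i. ennreal (f i)"] assms by simp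

lemma pmf_sums_one: "(\<lambda>k. pmf p k) sums (1::real)"
proof (rule ennreal_suminf_eq_imp_sums)
  show "(\<Sum>k. ennreal (pmf p k)) = ennreal 1"
    using nn_integral_count_space_nat[of "\<lambda>k. ennreal (pmf p k)"] nn_integral_pmf[where p=p and A=UNIV]
    by simp
qed auto

lemma pgf_sums:
  assumes "0 \<le> t" and "t \<le> 1"
  shows "(\<lambda>k. pmf p k * t ^ k) sums pgf p t"
proof -
  have "summable (\<lambda>k. pmf p k * t ^ k)"
  proof (rule summable_comparison_test)
    show "\<exists>N. \<forall>n\<ge>N. norm (pmf p n * t ^ n) \<le> pmf p n"
      using assms by (auto intro!: mult_left_le power_le_one)
  qed (use pmf_sums_one in \<open>auto simp: sums_iff\<close>)
  then show ?thesis by (simp add: pgf_def summable_sums)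
qed

lemma pgf_nonneg: "0 \<le> t \<Longrightarrow> t \<le> 1 \<Longrightarrow> 0 \<le> pgf p t"
  by (rule sums_le[OF _ sums_zero pgf_sums]) simp_all

lemma pgf_le_one: "0 \<le> t \<Longrightarrow> t \<le> 1 \<Longrightarrow> pgf p t \<le> 1"
  by (rule sums_le[OF _ pgf_sums pmf_sums_one[of p]]) (simp_all add: mult_left_le power_le_one)

lemma pgf_mono: "0 \<le> t \<Longrightarrow> t \<le> u \<Longrightarrow> u \<le> 1 \<Longrightarrow> pgf p t \<le> pgf p u"
  by (rule sums_le[OF _ pgf_sums pgf_sums]) (auto intro!: mult_left_mono power_mono)

lemma gw_step_sums:
  assumes s: "0 \<le> s" "s \<le> 1" and a: "\<And>n. 0 \<le> a n" and "a 0 = 0"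
    and A: "(\<lambda>n. a n * s ^ n) sums A" and "A \<le> 1"
  shows "(\<lambda>n. gw_step p a n * s ^ n) sums (s * pgf p A)"
proof -
  have "0 \<le> A" by (rule sums_le[OF _ sums_zero A]) (use a s in simp)
  define T where "T m k = pmf p k * composition_sum a k m * s ^ m" for m k
  have T_nonneg: "0 \<le> T m k" for m k
    unfolding T_def using s a by (auto intro!: mult_nonneg_nonneg composition_sum_nonneg)
  have "(\<Sum>m. ennreal (gw_step p a (Suc m) * s ^ m)) = (\<Sum>m. \<Sum>k. ennreal (T m k))"
  proof (intro suminf_cong)
    fix m
    have "(\<Sum>k. ennreal (T m k)) = (\<Sum>k\<le>m. ennreal (T m k))"
      by (rule suminf_finite) (auto simp: T_def composition_sum_eq_0)
    then show "ennreal (gw_step p a (Suc m) * s ^ m) = (\<Sum>k. ennreal (T m k))"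
      using T_nonneg by (simp add: gw_step_Suc T_def sum_distrib_right)
  qed
  also have "\<dots> = (\<Sum>k. \<Sum>m. ennreal (T m k))"
    by (rule suminf_swap_ennreal)
  also have "\<dots> = (\<Sum>k. ennreal (pmf p k * A ^ k))"
  proof (intro suminf_cong)
    fix k
    have "(\<lambda>m. pmf p k * (composition_sum a k m * s ^ m)) sums (pmf p k * A ^ k)"
      by (intro sums_mult composition_sum_sums assms)
    then show "(\<Sum>m. ennreal (T m k)) = ennreal (pmf p k * A ^ k)"
      using T_nonneg by (intro suminf_ennreal_eq) (auto simp: T_def mult.assoc)
  qed
  also have "\<dots> = ennreal (pgf p A)"
    by (rule suminf_ennreal_eq[OF _ pgf_sums]) (use \<open>0 \<le> A\<close> \<open>A \<le> 1\<close> in simp_all)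
  finally have "(\<lambda>m. gw_step p a (Suc m) * s ^ m) sums pgf p A"
    by (rule ennreal_suminf_eq_imp_sums[rotated])
       (use s \<open>0 \<le> A\<close> \<open>A \<le> 1\<close> in \<open>simp_all add: gw_step_nonneg a pgf_nonneg\<close>)
  from sums_mult[OF this, of s]
  have "(\<lambda>m. gw_step p a (Suc m) * s ^ Suc m) sums (s * pgf p A)"
    by (simp add: mult_ac)
  then show ?thesis using sums_Suc_iff[of "\<lambda>n. gw_step p a n * s ^ n"] by simp
qed

definition gw_approx_pgf :: "nat pmf \<Rightarrow> nat \<Rightarrow> real \<Rightarrow> real" where
  "gw_approx_pgf p j s = (\<Sum>n. gw_approx p j n * s ^ n)"

definition gw_size_pgf :: "nat pmf \<Rightarrow> real \<Rightarrow> real" where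
  "gw_size_pgf p s = (\<Sum>n. gw_size_prob p n * s ^ n)"

lemma gw_approx_pgf_sums_le_one:
  assumes s: "0 \<le> s" "s \<le> 1"
  shows "(\<lambda>n. gw_approx p j n * s ^ n) sums gw_approx_pgf p j s \<and> gw_approx_pgf p j s \<le> 1"
proof -
  have "\<exists>G. (\<lambda>n. gw_approx p j n * s ^ n) sums G \<and> G \<le> 1"
  proof (induction j)
    case (Suc j)
    then obtain G where G: "(\<lambda>n. gw_approx p j n * s ^ n) sums G" "G \<le> 1" by blast
    have "0 \<le> G" by (rule sums_le[OF _ sums_zero G(1)]) (use s in \<open>simp add: gw_approx_nonneg\<close>)
    have "(\<lambda>n. gw_step p (gw_approx p j) n * s ^ n) sums (s * pgf p G)"
      by (rule gw_step_sums[OF s _ _ G]) (simp_all add: gw_approx_nonneg)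
    moreover have "s * pgf p G \<le> 1"
      using s pgf_le_one[OF \<open>0 \<le> G\<close> G(2)] pgf_nonneg[OF \<open>0 \<le> G\<close> G(2)] by (simp add: mult_le_one)
    ultimately show ?case by auto
  qed (auto intro!: exI[of _ 0])
  then show ?thesis by (auto simp: gw_approx_pgf_def sums_iff)
qed

lemma gw_approx_pgf_sums: "0 \<le> s \<Longrightarrow> s \<le> 1 \<Longrightarrow> (\<lambda>n. gw_approx p j n * s ^ n) sums gw_approx_pgf p j s"
  using gw_approx_pgf_sums_le_one by blast

lemma gw_approx_pgf_le_one: "0 \<le> s \<Longrightarrow> s \<le> 1 \<Longrightarrow> gw_approx_pgf p j s \<le> 1"
  using gw_approx_pgf_sums_le_one by blast

lemma gw_approx_pgf_nonneg: "0 \<le> s \<Longrightarrow> s \<le> 1 \<Longrightarrow> 0 \<le> gw_approx_pgf p j s"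
  by (rule sums_le[OF _ sums_zero gw_approx_pgf_sums]) (simp_all add: gw_approx_nonneg)

lemma gw_approx_pgf_Suc:
  assumes "0 \<le> s" "s \<le> 1"
  shows "gw_approx_pgf p (Suc j) s = s * pgf p (gw_approx_pgf p j s)"
proof (rule sums_unique2)
  show "(\<lambda>n. gw_approx p (Suc j) n * s ^ n) sums gw_approx_pgf p (Suc j) s"
    by (rule gw_approx_pgf_sums[OF assms])
  show "(\<lambda>n. gw_approx p (Suc j) n * s ^ n) sums (s * pgf p (gw_approx_pgf p j s))"
    unfolding gw_approx_Suc
    by (rule gw_step_sums[OF assms _ _ gw_approx_pgf_sums[OF assms] gw_approx_pgf_le_one[OF assms]])
       (simp_all add: gw_approx_nonneg)
qed

lemma gw_approx_pgf_mono:
  assumes s: "0 \<le> s" "s \<le> 1" and "j \<le> j'"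
  shows "gw_approx_pgf p j s \<le> gw_approx_pgf p j' s"
proof (rule sums_le[OF _ gw_approx_pgf_sums[OF s] gw_approx_pgf_sums[OF s]])
  show "gw_approx p j n * s ^ n \<le> gw_approx p j' n * s ^ n" for n
    using assms by (intro mult_right_mono gw_approx_mono) auto
qed

lemma sum_size_prob_le_approx_pgf:
  assumes "0 \<le> s" "s \<le> 1"
  shows "(\<Sum>n<j. gw_size_prob p n * s ^ n) \<le> gw_approx_pgf p j s"
proof -
  have "(\<Sum>n<j. gw_size_prob p n * s ^ n) = (\<Sum>n<j. gw_approx p j n * s ^ n)"
    by (intro sum.cong) (simp_all add: gw_approx_eq_size_prob)
  also have "\<dots> \<le> gw_approx_pgf p j s"
    unfolding gw_approx_pgf_def
    by (rule sum_le_suminf) (use gw_approx_pgf_sums[OF assms] assms in \<open>auto simp: sums_iff gw_approx_nonneg\<close>)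
  finally show ?thesis .
qed

lemma sum_size_prob_le_one:
  "0 \<le> s \<Longrightarrow> s \<le> 1 \<Longrightarrow> (\<Sum>n<j. gw_size_prob p n * s ^ n) \<le> 1"
  using sum_size_prob_le_approx_pgf gw_approx_pgf_le_one by (rule order_trans)

lemma gw_size_pgf_sums: "0 \<le> s \<Longrightarrow> s \<le> 1 \<Longrightarrow> (\<lambda>n. gw_size_prob p n * s ^ n) sums gw_size_pgf p s"
  unfolding gw_size_pgf_def
  by (intro summable_sums summableI_nonneg_bounded[where x=1] sum_size_prob_le_one)
     (simp_all add: gw_size_prob_nonneg)

lemma gw_size_pgf_nonneg: "0 \<le> s \<Longrightarrow> s \<le> 1 \<Longrightarrow> 0 \<le> gw_size_pgf p s"
  by (rule sums_le[OF _ sums_zero gw_size_pgf_sums]) (simp_all add: gw_size_prob_nonneg)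

lemma gw_approx_pgf_le_size_pgf:
  assumes s: "0 \<le> s" "s \<le> 1"
  shows "gw_approx_pgf p j s \<le> gw_size_pgf p s"
proof (rule sums_le[OF _ gw_approx_pgf_sums[OF s] gw_size_pgf_sums[OF s]])
  show "gw_approx p j n * s ^ n \<le> gw_size_prob p n * s ^ n" for n
    using s by (intro mult_right_mono gw_approx_le_size_prob) auto
qed

lemma gw_size_pgf_le_one: "0 \<le> s \<Longrightarrow> s \<le> 1 \<Longrightarrow> gw_size_pgf p s \<le> 1"
  unfolding gw_size_pgf_def using gw_size_pgf_sums[of s p]
  by (intro suminf_le_const sum_size_prob_le_one) (simp_all add: sums_iff)

lemma gw_approx_pgf_tendsto:
  assumes s: "0 \<le> s" "s \<le> 1"
  shows "(\<lambda>j. gw_approx_pgf p j s) \<longlonglongrightarrow> gw_size_pgf p s"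
proof (rule increasing_LIMSEQ)
  fix j show "gw_approx_pgf p j s \<le> gw_approx_pgf p (Suc j) s"
    by (rule gw_approx_pgf_mono[OF s]) simp
next
  fix j show "gw_approx_pgf p j s \<le> gw_size_pgf p s"
    by (rule gw_approx_pgf_le_size_pgf[OF s])
next
  fix e :: real assume "0 < e"
  moreover have "(\<lambda>j. \<Sum>n<j. gw_size_prob p n * s ^ n) \<longlonglongrightarrow> gw_size_pgf p s"
    using gw_size_pgf_sums[OF s] by (simp add: sums_def)
  ultimately obtain j where "\<bar>(\<Sum>n<j. gw_size_prob p n * s ^ n) - gw_size_pgf p s\<bar> < e"
    by (auto simp: LIMSEQ_def dist_real_def)
  then show "\<exists>j. gw_size_pgf p s \<le> gw_approx_pgf p j s + e"
    using sum_size_prob_le_approx_pgf[OF s, of p j] by (intro exI[of _ j]) linarith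
qed

text \<open>Only partial sums of \<open>\<Phi>\<close> are continuous a priori, so the recursion
  \<open>G\<^sub>j\<^sub>+\<^sub>1 = s \<Phi>(G\<^sub>j)\<close> survives the limit \<open>G\<^sub>j \<rightarrow> Y\<close> as an inequality.\<close>

lemma gw_size_pgf_fixpoint_le:
  assumes s: "0 \<le> s" "s \<le> 1"
  shows "s * pgf p (gw_size_pgf p s) \<le> gw_size_pgf p s"
proof -
  let ?Y = "gw_size_pgf p s"
  have Y: "0 \<le> ?Y" "?Y \<le> 1" using gw_size_pgf_nonneg[OF s] gw_size_pgf_le_one[OF s] by auto
  have sums: "(\<lambda>k. s * (pmf p k * ?Y ^ k)) sums (s * pgf p ?Y)"
    by (rule sums_mult[OF pgf_sums[OF Y]])
  show ?thesis
    unfolding sums_unique[OF sums]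
  proof (rule suminf_le_const[OF sums_summable[OF sums]])
    fix K
    have "(\<lambda>j. \<Sum>k<K. s * (pmf p k * gw_approx_pgf p j s ^ k)) \<longlonglongrightarrow> (\<Sum>k<K. s * (pmf p k * ?Y ^ k))"
      by (intro tendsto_intros gw_approx_pgf_tendsto[OF s])
    moreover have "(\<Sum>k<K. s * (pmf p k * gw_approx_pgf p j s ^ k)) \<le> ?Y" for j
    proof -
      let ?G = "gw_approx_pgf p j s"
      have G: "0 \<le> ?G" "?G \<le> 1" using gw_approx_pgf_nonneg[OF s] gw_approx_pgf_le_one[OF s] by auto
      have sums_G: "(\<lambda>k. s * (pmf p k * ?G ^ k)) sums (s * pgf p ?G)"
        by (rule sums_mult[OF pgf_sums[OF G]])
      have "(\<Sum>k<K. s * (pmf p k * ?G ^ k)) \<le> s * pgf p ?G"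
        unfolding sums_unique[OF sums_G]
        by (rule sum_le_suminf[OF sums_summable[OF sums_G]]) (use s G in auto)
      also have "\<dots> = gw_approx_pgf p (Suc j) s" by (simp add: gw_approx_pgf_Suc[OF s])
      also have "\<dots> \<le> ?Y" by (rule gw_approx_pgf_le_size_pgf[OF s])
      finally show ?thesis .
    qed
    ultimately show "(\<Sum>k<K. s * (pmf p k * ?Y ^ k)) \<le> ?Y"
      by (intro LIMSEQ_le_const2) auto
  qed
qed

section \<open>Critical offspring distributions\<close>

lemma critical_finvar_mean_sums:
  assumes "critical_finvar p"
  shows "(\<lambda>k. pmf p k * real k) sums 1"
proof -
  have E: "measure_pmf.expectation p real = 1" using assms by (simp add: critical_finvar_def)
  then have "integrable (measure_pmf p) real"
    using not_integrable_integral_eq by fastforce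
  then have "(\<integral>\<^sup>+k. ennreal (real k) \<partial>measure_pmf p) = ennreal (measure_pmf.expectation p real)"
    by (intro nn_integral_eq_integral) simp_all
  then have "(\<Sum>k. ennreal (pmf p k * real k)) = ennreal 1"
    by (simp add: E nn_integral_measure_pmf nn_integral_count_space_nat ennreal_mult')
  then show ?thesis by (rule ennreal_suminf_eq_imp_sums[rotated]) auto
qed

lemma bernoulli_remainder_ge_square:
  fixes u :: real
  assumes u: "0 \<le> u" "u \<le> 1" and "2 \<le> k"
  shows "u ^ 2 \<le> (1 - u) ^ k - 1 + real k * u"
  using \<open>2 \<le> k\<close>
proof (induction k rule: dec_induct)
  case base then show ?case by (simp add: power2_eq_square algebra_simps)
next
  case (step k)
  have "(1 - u) ^ k \<le> 1" using u by (simp add: power_le_one)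
  then have "0 \<le> u * (1 - (1 - u) ^ k)" using u by simp
  moreover have "(1 - u) ^ Suc k - 1 + real (Suc k) * u
      = ((1 - u) ^ k - 1 + real k * u) + u * (1 - (1 - u) ^ k)"
    by (simp add: algebra_simps)
  ultimately show ?case using step.IH by linarith
qed

lemma bernoulli_remainder_nonneg:
  fixes u :: real
  assumes "0 \<le> u" "u \<le> 1"
  shows "0 \<le> (1 - u) ^ k - 1 + real k * u"
proof (cases "2 \<le> k")
  case True then show ?thesis
    using bernoulli_remainder_ge_square[OF assms True] zero_le_power2[of u] by linarith
next
  case False then have "k = 0 \<or> k = 1" by auto
  then show ?thesis by auto
qed

definition prob_ge_two :: "nat pmf \<Rightarrow> real" where
  "prob_ge_two p = 1 - pmf p 0 - pmf p 1"

lemma prob_ge_two_sums: "(\<lambda>k. if 2 \<le> k then pmf p k else 0) sums prob_ge_two p"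
proof -
  have "(\<lambda>k. pmf p k - (if k = 0 then pmf p k else 0) - (if k = 1 then pmf p k else 0))
      sums (1 - pmf p 0 - pmf p 1)"
    by (intro sums_diff pmf_sums_one sums_single)
  moreover have "(\<lambda>k. pmf p k - (if k = 0 then pmf p k else 0) - (if k = 1 then pmf p k else 0))
      = (\<lambda>k. if 2 \<le> k then pmf p k else 0)"
    by (auto simp: fun_eq_iff)
  ultimately show ?thesis by (simp add: prob_ge_two_def)
qed

text \<open>Second-order Taylor bound at \<open>1\<close>, where a mean-one pgf touches the diagonal.\<close>

lemma pgf_ge_quadratic:
  assumes mean: "(\<lambda>k. pmf p k * real k) sums 1" and t: "0 \<le> t" "t \<le> 1"
  shows "t + prob_ge_two p * (1 - t) ^ 2 \<le> pgf p t"
proof -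
  have u: "0 \<le> 1 - t" "1 - t \<le> 1" using t by auto
  have "prob_ge_two p * (1 - t) ^ 2 \<le> pgf p t - 1 + 1 * (1 - t)"
  proof (rule sums_le)
    show "(\<lambda>k. (if 2 \<le> k then pmf p k else 0) * (1 - t) ^ 2) sums (prob_ge_two p * (1 - t) ^ 2)"
      by (intro sums_mult2 prob_ge_two_sums)
    show "(\<lambda>k. pmf p k * t ^ k - pmf p k + pmf p k * real k * (1 - t)) sums (pgf p t - 1 + 1 * (1 - t))"
      by (intro sums_add sums_diff pgf_sums t pmf_sums_one sums_mult2 mean)
    fix k
    have "pmf p k * t ^ k - pmf p k + pmf p k * real k * (1 - t)
        = pmf p k * ((1 - (1 - t)) ^ k - 1 + real k * (1 - t))"
      by (simp add: algebra_simps)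
    then show "(if 2 \<le> k then pmf p k else 0) * (1 - t) ^ 2
        \<le> pmf p k * t ^ k - pmf p k + pmf p k * real k * (1 - t)"
      using bernoulli_remainder_ge_square[OF u, of k] bernoulli_remainder_nonneg[OF u, of k]
      by (auto intro!: mult_left_mono)
  qed
  then show ?thesis by simp
qed

lemma prob_ge_two_pos:
  assumes crit: "critical_finvar p"
  shows "0 < prob_ge_two p"
proof (rule ccontr)
  assume "\<not> 0 < prob_ge_two p"
  moreover have "0 \<le> prob_ge_two p" by (rule sums_le[OF _ sums_zero prob_ge_two_sums]) simp
  ultimately have "prob_ge_two p = 0" by simp
  then have "(\<Sum>k. if 2 \<le> k then pmf p k else 0) = 0"
    using prob_ge_two_sums[of p] by (simp add: sums_iff)
  then have tail: "pmf p k = 0" if "2 \<le> k" for k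
    using prob_ge_two_sums[of p] that
    by (subst (asm) suminf_eq_zero_iff) (auto simp: sums_iff dest: spec[of _ k])
  have "(\<lambda>k. pmf p k * real k) = (\<lambda>k. if k = 1 then pmf p 1 else 0)"
  proof
    fix k show "pmf p k * real k = (if k = 1 then pmf p 1 else 0)"
      using tail[of k] by (cases "k \<le> 1") (auto simp: le_Suc_eq)
  qed
  then have "pmf p 1 = 1"
    using critical_finvar_mean_sums[OF crit] sums_single[of 1 "\<lambda>_. pmf p 1"] sums_unique2 by force
  with \<open>prob_ge_two p = 0\<close> have "pmf p 0 = 0" by (simp add: prob_ge_two_def)
  have "p = return_pmf 1"
  proof (rule pmf_eqI)
    fix k show "pmf p k = pmf (return_pmf 1) k"
      using tail[of k] \<open>pmf p 0 = 0\<close> \<open>pmf p 1 = 1\<close> by (cases "k \<le> 1") (auto simp: le_Suc_eq)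
  qed
  then show False using crit by (simp add: critical_finvar_def)
qed

lemma pgf_0_pos: "critical_finvar p \<Longrightarrow> 0 < pgf p 0"
  using pgf_ge_quadratic[OF critical_finvar_mean_sums, of p 0] prob_ge_two_pos[of p] by simp

text \<open>Positive variance makes \<open>\<Phi>(t) > t\<close> on \<open>[0, 1)\<close>, so \<open>1\<close> is the only possible value of
  \<open>Y(1) \<ge> \<Phi>(Y(1))\<close>.\<close>

lemma gw_size_pgf_one:
  assumes crit: "critical_finvar p"
  shows "gw_size_pgf p 1 = 1"
proof -
  let ?Y = "gw_size_pgf p 1"
  have Y: "0 \<le> ?Y" "?Y \<le> 1" using gw_size_pgf_nonneg gw_size_pgf_le_one by auto
  have "?Y + prob_ge_two p * (1 - ?Y) ^ 2 \<le> pgf p ?Y"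
    by (rule pgf_ge_quadratic[OF critical_finvar_mean_sums[OF crit] Y])
  moreover have "pgf p ?Y \<le> ?Y" using gw_size_pgf_fixpoint_le[of 1 p] by simp
  ultimately have "prob_ge_two p * (1 - ?Y) ^ 2 \<le> 0" by linarith
  then have "(1 - ?Y) ^ 2 \<le> 0" using prob_ge_two_pos[OF crit] by (simp add: mult_le_0_iff)
  then show ?thesis by simp
qed

lemma gw_size_prob_sums_one: "critical_finvar p \<Longrightarrow> gw_size_prob p sums 1"
  using gw_size_pgf_sums[of 1 p] gw_size_pgf_one[of p] by simp

text \<open>Since \<open>s \<Phi>(Y(s)) \<le> Y(s)\<close> and \<open>\<Phi>\<close> grows quadratically away from the diagonal,
  \<open>1 - Y(s) = O(\<surd>(1 - s))\<close>; this is what makes \<open>\<mu>(\<alpha>)\<close> finite for \<open>\<alpha> < 1/2\<close>.\<close>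

lemma gw_size_pgf_deficit_le:
  assumes crit: "critical_finvar p" and s: "0 \<le> s" "s \<le> 1"
  shows "s * prob_ge_two p * (1 - gw_size_pgf p s) ^ 2 \<le> 1 - s"
proof -
  define Y where "Y = gw_size_pgf p s"
  have Y: "0 \<le> Y" "Y \<le> 1" using gw_size_pgf_nonneg[OF s] gw_size_pgf_le_one[OF s] by (auto simp: Y_def)
  have "s * (Y + prob_ge_two p * (1 - Y) ^ 2) \<le> s * pgf p Y"
    using pgf_ge_quadratic[OF critical_finvar_mean_sums[OF crit] Y] s(1) by (rule mult_left_mono)
  also have "\<dots> \<le> Y" unfolding Y_def by (rule gw_size_pgf_fixpoint_le[OF s])
  finally have "s * prob_ge_two p * (1 - Y) ^ 2 \<le> Y * (1 - s)" by (simp add: algebra_simps)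
  also have "\<dots> \<le> 1 - s" using Y s by (simp add: mult_left_le_one_le)
  finally show ?thesis by (simp add: Y_def)
qed

lemma gw_size_pgf_deficit_bound:
  assumes crit: "critical_finvar p"
  obtains K where "0 \<le> K" and "\<And>s. 0 < s \<Longrightarrow> s \<le> 1 \<Longrightarrow> (1 - gw_size_pgf p s) ^ 2 \<le> K * (1 - s)"
proof
  define c where "c = prob_ge_two p"
  have "0 < c" using prob_ge_two_pos[OF crit] by (simp add: c_def)
  show "0 \<le> max 2 (2 / c)" by simp
  fix s :: real assume s: "0 < s" "s \<le> 1"
  define Y where "Y = gw_size_pgf p s"
  have main: "s * c * (1 - Y) ^ 2 \<le> 1 - s"
    using gw_size_pgf_deficit_le[OF crit, of s] s by (simp add: c_def Y_def)
  have "0 \<le> Y" "Y \<le> 1" using gw_size_pgf_nonneg[of s p] gw_size_pgf_le_one[of s p] s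
    by (auto simp: Y_def)
  then have "(1 - Y) ^ 2 \<le> 1" by (simp add: power_le_one)
  show "(1 - gw_size_pgf p s) ^ 2 \<le> max 2 (2 / c) * (1 - s)"
  proof (cases "s < 1/2")
    case True
    then have "(1 - Y) ^ 2 \<le> 2 * (1 - s)" using \<open>(1 - Y) ^ 2 \<le> 1\<close> by simp
    also have "\<dots> \<le> max 2 (2 / c) * (1 - s)" using s by (intro mult_right_mono) auto
    finally show ?thesis by (simp add: Y_def)
  next
    case False
    have "c / 2 * (1 - Y) ^ 2 \<le> s * c * (1 - Y) ^ 2"
      using False \<open>0 < c\<close> by (intro mult_right_mono) auto
    then have "c / 2 * (1 - Y) ^ 2 \<le> 1 - s" using main by linarith
    then have "(1 - Y) ^ 2 \<le> (2 / c) * (1 - s)" using \<open>0 < c\<close> by (simp add: field_simps)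
    also have "\<dots> \<le> max 2 (2 / c) * (1 - s)" using s by (intro mult_right_mono) auto
    finally show ?thesis by (simp add: Y_def)
  qed
qed

section \<open>Comparison of the size generating functions\<close>

lemma gw_approx_pgf_compare:
  assumes crit2: "critical_finvar p2" and le: "\<forall>t\<in>{0<..<1}. pgf p1 t \<le> pgf p2 t"
    and s: "0 < s" "s < 1"
  shows "gw_approx_pgf p1 j s \<le> gw_approx_pgf p2 (Suc j) s"
proof (induction j)
  case 0 then show ?case using gw_approx_pgf_nonneg[of s p2 1] s by (simp add: gw_approx_pgf_def)
next
  case (Suc j)
  have s': "0 \<le> s" "s \<le> 1" using s by auto
  let ?G = "gw_approx_pgf p2 j s" and ?t = "gw_approx_pgf p2 (Suc j) s"
  have G: "0 \<le> ?G" "?G \<le> 1" using gw_approx_pgf_nonneg[OF s'] gw_approx_pgf_le_one[OF s'] by auto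
  have "0 < pgf p2 ?G" using pgf_0_pos[OF crit2] pgf_mono[of 0 ?G p2] G by linarith
  then have t0: "0 < ?t" using s by (simp add: gw_approx_pgf_Suc[OF s'])
  have "s * pgf p2 ?G < 1" using s pgf_le_one[OF G, of p2] mult_left_le[of "pgf p2 ?G" s] by linarith
  then have t1: "?t < 1" by (simp add: gw_approx_pgf_Suc[OF s'])
  have "gw_approx_pgf p1 (Suc j) s = s * pgf p1 (gw_approx_pgf p1 j s)"
    by (simp add: gw_approx_pgf_Suc[OF s'])
  also have "\<dots> \<le> s * pgf p1 ?t"
    using Suc.IH gw_approx_pgf_nonneg[OF s'] t1 s by (intro mult_left_mono pgf_mono) auto
  also have "\<dots> \<le> s * pgf p2 ?t"
    using le t0 t1 s by (intro mult_left_mono) auto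
  also have "\<dots> = gw_approx_pgf p2 (Suc (Suc j)) s" by (simp add: gw_approx_pgf_Suc[OF s'])
  finally show ?case .
qed

lemma gw_size_pgf_compare:
  assumes crit1: "critical_finvar p1" and crit2: "critical_finvar p2"
    and le: "\<forall>t\<in>{0<..<1}. pgf p1 t \<le> pgf p2 t" and s: "0 < s" "s \<le> 1"
  shows "gw_size_pgf p1 s \<le> gw_size_pgf p2 s"
proof (cases "s = 1")
  case True then show ?thesis using gw_size_pgf_one[OF crit1] gw_size_pgf_one[OF crit2] by simp
next
  case False
  have s': "0 \<le> s" "s \<le> 1" using s by auto
  have "(\<Sum>n<N. gw_size_prob p1 n * s ^ n) \<le> gw_size_pgf p2 s" for N
  proof -
    have "(\<Sum>n<N. gw_size_prob p1 n * s ^ n) \<le> gw_approx_pgf p1 N s"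
      by (rule sum_size_prob_le_approx_pgf[OF s'])
    also have "\<dots> \<le> gw_approx_pgf p2 (Suc N) s"
      using False s by (intro gw_approx_pgf_compare[OF crit2 le]) auto
    also have "\<dots> \<le> gw_size_pgf p2 s" by (rule gw_approx_pgf_le_size_pgf[OF s'])
    finally show ?thesis .
  qed
  then show ?thesis
    using gw_size_pgf_sums[OF s', of p1] by (auto simp: gw_size_pgf_def sums_iff intro: suminf_le_const)
qed

section \<open>Mellin transforms\<close>

lemma nn_integral_powr_scaled:
  fixes g :: "real \<Rightarrow> real" and n :: real
  assumes n: "0 < n" and g: "g \<in> borel_measurable borel" and g_nonneg: "\<And>u. 0 < u \<Longrightarrow> 0 \<le> g u"
  shows "(\<integral>\<^sup>+x. ennreal (indicator {0<..} x * x powr \<gamma> * g (n * x)) \<partial>lborel)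
       = ennreal (n powr (- \<gamma> - 1)) * (\<integral>\<^sup>+u. ennreal (indicator {0<..} u * u powr \<gamma> * g u) \<partial>lborel)"
proof -
  define F where "F u = ennreal (indicator {0<..} u * u powr \<gamma> * g u)" for u
  define I where "I = (\<integral>\<^sup>+x. ennreal (indicator {0<..} x * x powr \<gamma> * g (n * x)) \<partial>lborel)"
  have F_scaled: "F (n * x) = ennreal (n powr \<gamma>) * ennreal (indicator {0<..} x * x powr \<gamma> * g (n * x))"
    for x
    using n g_nonneg[of "n * x"]
    by (cases "0 < x") (auto simp: F_def powr_mult ennreal_mult'[symmetric] mult_ac zero_less_mult_iff)
  have "F \<in> borel_measurable borel" unfolding F_def using g by measurable
  then have "(\<integral>\<^sup>+u. F u \<partial>lborel) = ennreal n * (\<integral>\<^sup>+x. F (n * x) \<partial>lborel)"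
    using nn_integral_real_affine[of F n 0] n by simp
  also have "(\<integral>\<^sup>+x. F (n * x) \<partial>lborel) = ennreal (n powr \<gamma>) * I"
    unfolding F_scaled I_def by (rule nn_integral_cmult) (use g in measurable)
  finally have "(\<integral>\<^sup>+u. F u \<partial>lborel) = ennreal (n powr (\<gamma> + 1)) * I"
    using n by (simp add: ennreal_mult' mult_ac powr_add)
  then have "ennreal (n powr (- \<gamma> - 1)) * (\<integral>\<^sup>+u. F u \<partial>lborel)
      = ennreal (n powr (- \<gamma> - 1) * n powr (\<gamma> + 1)) * I"
    by (simp add: ennreal_mult mult.assoc)
  also have "n powr (- \<gamma> - 1) * n powr (\<gamma> + 1) = 1"
    using n by (simp flip: powr_add)
  finally show ?thesis by (simp add: F_def I_def)
qed

text \<open>A Dirichlet series with kernel \<open>g\<close> is a Mellin transform: substituting \<open>u = n x\<close> in each term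
  turns \<open>n\<^sup>\<alpha>\<close> into an integral against \<open>x\<^sup>-\<^sup>\<alpha>\<^sup>-\<^sup>1 g(n x)\<close>.\<close>

lemma suminf_powr_mellin:
  fixes q :: "nat \<Rightarrow> real" and g :: "real \<Rightarrow> real"
  assumes q: "\<And>n. 0 \<le> q n" and "q 0 = 0"
    and g: "g \<in> borel_measurable borel" and g_nonneg: "\<And>u. 0 < u \<Longrightarrow> 0 \<le> g u"
  shows "(\<Sum>n. ennreal (q n * real n powr \<alpha>))
           * (\<integral>\<^sup>+u. ennreal (indicator {0<..} u * u powr (- \<alpha> - 1) * g u) \<partial>lborel)
       = (\<integral>\<^sup>+x. ennreal (indicator {0<..} x * x powr (- \<alpha> - 1))
           * (\<Sum>n. ennreal (q n * g (real n * x))) \<partial>lborel)"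
proof -
  define C where "C = (\<integral>\<^sup>+u. ennreal (indicator {0<..} u * u powr (- \<alpha> - 1) * g u) \<partial>lborel)"
  define h where "h n x = ennreal (q n) * ennreal (indicator {0<..} x * x powr (- \<alpha> - 1) * g (real n * x))"
    for n x
  have h_eq: "ennreal (indicator {0<..} x * x powr (- \<alpha> - 1)) * ennreal (q n * g (real n * x)) = h n x"
    for n x
    using q g_nonneg[of "real n * x"]
    by (cases "0 < x \<and> 0 < n")
       (auto simp: h_def ennreal_mult'[symmetric] mult_ac \<open>q 0 = 0\<close> not_less)
  have "ennreal (q n * real n powr \<alpha>) * C = (\<integral>\<^sup>+x. h n x \<partial>lborel)" for n
  proof (cases "n = 0")
    case False
    have "(\<integral>\<^sup>+x. h n x \<partial>lborel)
        = ennreal (q n) * (\<integral>\<^sup>+x. ennreal (indicator {0<..} x * x powr (- \<alpha> - 1) * g (real n * x)) \<partial>lborel)"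
      unfolding h_def by (rule nn_integral_cmult) (use g in measurable)
    also have "\<dots> = ennreal (q n) * (ennreal (real n powr \<alpha>) * C)"
      using nn_integral_powr_scaled[of "real n" g "- \<alpha> - 1"] False g g_nonneg by (simp add: C_def)
    finally show ?thesis using q by (simp add: ennreal_mult' mult.assoc)
  qed (simp add: h_def \<open>q 0 = 0\<close>)
  then have "(\<Sum>n. ennreal (q n * real n powr \<alpha>)) * C = (\<Sum>n. \<integral>\<^sup>+x. h n x \<partial>lborel)"
    by (simp flip: ennreal_suminf_multc)
  also have "\<dots> = (\<integral>\<^sup>+x. (\<Sum>n. h n x) \<partial>lborel)"
    by (rule nn_integral_suminf[symmetric]) (unfold h_def, use g in measurable)
  finally show ?thesis by (simp only: C_def h_eq[symmetric] ennreal_suminf_cmult)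
qed

lemma Gamma_mellin:
  assumes "0 < (\<beta>::real)"
  shows "(\<integral>\<^sup>+u. ennreal (indicator {0<..} u * u powr (\<beta> - 1) * exp (- u)) \<partial>lborel) = ennreal (Gamma \<beta>)"
proof -
  have "ennreal (indicator {0<..} t * t powr (\<beta> - 1) * exp (- t))
      = ennreal (indicator {0..} t * t powr (\<beta> - 1) / exp t)" for t :: real
    by (cases "t < 0"; cases "t = 0") (auto simp: exp_minus field_simps)
  then show ?thesis using Gamma_conv_nn_integral_real[OF assms] by simp
qed

lemma nn_integral_powr_0_1:
  assumes "-1 < (a::real)"
  shows "(\<integral>\<^sup>+x. ennreal (indicator {0..1} x * x powr a) \<partial>lborel) = ennreal (1 / (a + 1))"
  using nn_integral_has_integral_lebesgue[OF _ has_integral_powr_from_0[OF assms, of 1]] by simp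

lemma nn_integral_powr_1_infinity:
  assumes "(e::real) < -1"
  shows "(\<integral>\<^sup>+x. ennreal (indicator {1..} x * x powr e) \<partial>lborel) = ennreal (- 1 / (e + 1))"
  using nn_integral_has_integral_lebesgue[OF _ has_integral_powr_to_inf[OF assms zero_less_one]] by simp

lemma nn_integral_powr_finite:
  fixes d :: "real \<Rightarrow> real"
  assumes \<alpha>: "0 < \<alpha>" "\<alpha> < \<theta>" and "0 \<le> c"
    and d: "\<And>x. 0 < x \<Longrightarrow> 0 \<le> d x \<and> d x \<le> 1 \<and> d x \<le> c * x powr \<theta>"
  shows "(\<integral>\<^sup>+x. ennreal (indicator {0<..} x * x powr (- \<alpha> - 1) * d x) \<partial>lborel) < \<infinity>"
proof -
  have "(\<integral>\<^sup>+x. ennreal (indicator {0<..} x * x powr (- \<alpha> - 1) * d x) \<partial>lborel)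
      \<le> (\<integral>\<^sup>+x. ennreal c * ennreal (indicator {0..1} x * x powr (\<theta> - \<alpha> - 1))
            + ennreal (indicator {1..} x * x powr (- \<alpha> - 1)) \<partial>lborel)"
  proof (rule nn_integral_mono)
    fix x :: real
    have "indicator {0<..} x * x powr (- \<alpha> - 1) * d x
        \<le> c * (indicator {0..1} x * x powr (\<theta> - \<alpha> - 1)) + indicator {1..} x * x powr (- \<alpha> - 1)"
    proof (cases "0 < x")
      case True
      have "x powr (- \<alpha> - 1) * d x \<le> x powr (- \<alpha> - 1) * (c * x powr \<theta>)"
        using d[OF True] by (intro mult_left_mono) auto
      also have "\<dots> = c * x powr (\<theta> - \<alpha> - 1)" by (simp add: powr_add[symmetric] algebra_simps)
      finally have small: "x powr (- \<alpha> - 1) * d x \<le> c * x powr (\<theta> - \<alpha> - 1)" .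
      have "x powr (- \<alpha> - 1) * d x \<le> x powr (- \<alpha> - 1)"
        using d[OF True] by (intro mult_left_le) auto
      then show ?thesis using True small \<open>0 \<le> c\<close> by (auto simp: indicator_def)
    qed (simp add: \<open>0 \<le> c\<close>)
    then show "ennreal (indicator {0<..} x * x powr (- \<alpha> - 1) * d x)
        \<le> ennreal c * ennreal (indicator {0..1} x * x powr (\<theta> - \<alpha> - 1))
          + ennreal (indicator {1..} x * x powr (- \<alpha> - 1))"
      using \<open>0 \<le> c\<close> by (simp add: ennreal_mult'[symmetric] ennreal_plus[symmetric] del: ennreal_plus)
  qed
  also have "\<dots> = ennreal c * (\<integral>\<^sup>+x. ennreal (indicator {0..1} x * x powr (\<theta> - \<alpha> - 1)) \<partial>lborel)
      + (\<integral>\<^sup>+x. ennreal (indicator {1..} x * x powr (- \<alpha> - 1)) \<partial>lborel)"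
    by (subst nn_integral_add) (auto simp: nn_integral_cmult)
  also have "\<dots> < \<infinity>"
    using \<alpha> by (simp add: nn_integral_powr_0_1 nn_integral_powr_1_infinity ennreal_mult_less_top)
  finally show ?thesis .
qed

text \<open>This equals \<open>\<Gamma>(1 - \<alpha>) / \<alpha>\<close>; only \<open>0 < \<dots> < \<infinity>\<close> is needed.\<close>

definition one_minus_exp_mellin :: "real \<Rightarrow> ennreal" where
  "one_minus_exp_mellin \<alpha> = (\<integral>\<^sup>+u. ennreal (indicator {0<..} u * u powr (- \<alpha> - 1) * (1 - exp (- u))) \<partial>lborel)"

lemma one_minus_exp_le: "0 \<le> u \<Longrightarrow> 1 - exp (- u) \<le> (u::real)"
  using exp_ge_add_one_self[of "- u"] by linarith

lemma one_minus_exp_mellin_finite: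
  assumes "0 < \<alpha>" "\<alpha> < 1"
  shows "one_minus_exp_mellin \<alpha> < \<infinity>"
  unfolding one_minus_exp_mellin_def
  by (rule nn_integral_powr_finite[of _ 1 1]) (use assms one_minus_exp_le in auto)

lemma one_minus_exp_mellin_pos:
  assumes "0 < \<alpha>"
  shows "0 < one_minus_exp_mellin \<alpha>"
proof -
  have "ennreal (1 - exp (- 1)) * ennreal (- 1 / ((- \<alpha> - 1) + 1))
      = (\<integral>\<^sup>+u. ennreal (1 - exp (- 1)) * ennreal (indicator {1..} u * u powr (- \<alpha> - 1)) \<partial>lborel)"
    by (subst nn_integral_cmult) (use assms nn_integral_powr_1_infinity[of "- \<alpha> - 1"] in auto)
  also have "\<dots> \<le> one_minus_exp_mellin \<alpha>"
    unfolding one_minus_exp_mellin_def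
  proof (rule nn_integral_mono)
    fix u :: real
    have "(1 - exp (- 1)) * (indicator {1..} u * u powr (- \<alpha> - 1))
        \<le> indicator {0<..} u * u powr (- \<alpha> - 1) * (1 - exp (- u))"
      by (cases "1 \<le> u") (auto simp: indicator_def mult_ac intro!: mult_left_mono)
    then show "ennreal (1 - exp (- 1)) * ennreal (indicator {1..} u * u powr (- \<alpha> - 1))
        \<le> ennreal (indicator {0<..} u * u powr (- \<alpha> - 1) * (1 - exp (- u)))"
      by (simp add: ennreal_mult'[symmetric] ennreal_leI)
  qed
  finally have "ennreal (1 - exp (- 1)) * ennreal (- 1 / ((- \<alpha> - 1) + 1)) \<le> one_minus_exp_mellin \<alpha>" .
  moreover have "0 < ennreal (1 - exp (- 1)) * ennreal (- 1 / ((- \<alpha> - 1) + 1))"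
    using assms by (simp add: ennreal_mult'[symmetric])
  ultimately show ?thesis by (rule order_less_le_trans[rotated])
qed

section \<open>Moments of the tree size\<close>

lemma gw_size_pgf_ennreal:
  assumes "0 \<le> s" "s \<le> 1"
  shows "(\<Sum>n. ennreal (gw_size_prob p n * s ^ n)) = ennreal (gw_size_pgf p s)"
  by (rule suminf_ennreal_eq[OF _ gw_size_pgf_sums[OF assms]]) (use assms gw_size_prob_nonneg in simp)

lemma gw_size_pgf_complement_ennreal:
  assumes "critical_finvar p" and "0 \<le> s" "s \<le> 1"
  shows "(\<Sum>n. ennreal (gw_size_prob p n * (1 - s ^ n))) = ennreal (1 - gw_size_pgf p s)"
proof (rule suminf_ennreal_eq)
  show "(\<lambda>n. gw_size_prob p n * (1 - s ^ n)) sums (1 - gw_size_pgf p s)"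
    using sums_diff[OF gw_size_prob_sums_one[OF assms(1)] gw_size_pgf_sums[OF assms(2,3)]]
    by (simp add: algebra_simps)
  show "0 \<le> gw_size_prob p n * (1 - s ^ n)" for n
    using assms gw_size_prob_nonneg by (simp add: power_le_one)
qed

lemma gw_mu_ennreal:
  assumes "summable (\<lambda>n. gw_size_prob p n * real n powr \<alpha>)"
  shows "(\<Sum>n. ennreal (gw_size_prob p n * real n powr \<alpha>)) = ennreal (gw_mu p \<alpha>)"
  unfolding gw_mu_def by (rule suminf_ennreal2) (simp_all add: gw_size_prob_nonneg assms)

lemma gw_mu_nonneg:
  assumes "summable (\<lambda>n. gw_size_prob p n * real n powr \<alpha>)"
  shows "0 \<le> gw_mu p \<alpha>"
  unfolding gw_mu_def by (rule suminf_nonneg[OF assms]) (simp add: gw_size_prob_nonneg)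

lemma summable_gw_size_prob_powr_nonpos:
  assumes "critical_finvar p" and "\<alpha> \<le> 0"
  shows "summable (\<lambda>n. gw_size_prob p n * real n powr \<alpha>)"
proof (rule summable_comparison_test)
  have "real n powr \<alpha> \<le> 1" for n
    using assms powr_mono[of \<alpha> 0 "real n"] by (cases "n = 0") auto
  then show "\<exists>N. \<forall>n\<ge>N. norm (gw_size_prob p n * real n powr \<alpha>) \<le> gw_size_prob p n"
    using gw_size_prob_nonneg by (auto simp: abs_mult mult_left_le)
qed (use gw_size_prob_sums_one[OF assms(1)] in \<open>simp add: sums_iff\<close>)

lemma exp_minus_real_mult: "exp (- (real n * x)) = exp (- x) ^ n"
  using exp_of_nat_mult[of n "- x"] by simp

lemma gw_mu_neg_mellin:
  assumes crit: "critical_finvar p" and "\<alpha> < 0"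
  shows "ennreal (gw_mu p \<alpha>) * ennreal (Gamma (- \<alpha>))
       = (\<integral>\<^sup>+x. ennreal (indicator {0<..} x * x powr (- \<alpha> - 1) * gw_size_pgf p (exp (- x))) \<partial>lborel)"
proof -
  have "(\<Sum>n. ennreal (gw_size_prob p n * real n powr \<alpha>))
        * (\<integral>\<^sup>+u. ennreal (indicator {0<..} u * u powr (- \<alpha> - 1) * exp (- u)) \<partial>lborel)
      = (\<integral>\<^sup>+x. ennreal (indicator {0<..} x * x powr (- \<alpha> - 1))
          * (\<Sum>n. ennreal (gw_size_prob p n * exp (- (real n * x)))) \<partial>lborel)"
    by (rule suminf_powr_mellin) (simp_all add: gw_size_prob_nonneg)
  then have "ennreal (gw_mu p \<alpha>) * ennreal (Gamma (- \<alpha>))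
      = (\<integral>\<^sup>+x. ennreal (indicator {0<..} x * x powr (- \<alpha> - 1))
          * (\<Sum>n. ennreal (gw_size_prob p n * exp (- (real n * x)))) \<partial>lborel)"
    using Gamma_mellin[of "- \<alpha>"] assms
    by (simp add: gw_mu_ennreal summable_gw_size_prob_powr_nonpos)
  also have "\<dots> = (\<integral>\<^sup>+x. ennreal (indicator {0<..} x * x powr (- \<alpha> - 1) * gw_size_pgf p (exp (- x))) \<partial>lborel)"
  proof (rule nn_integral_cong)
    fix x :: real
    show "ennreal (indicator {0<..} x * x powr (- \<alpha> - 1))
          * (\<Sum>n. ennreal (gw_size_prob p n * exp (- (real n * x))))
        = ennreal (indicator {0<..} x * x powr (- \<alpha> - 1) * gw_size_pgf p (exp (- x)))"
      by (cases "0 < x")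
         (simp_all add: exp_minus_real_mult gw_size_pgf_ennreal gw_size_pgf_nonneg ennreal_mult')
  qed
  finally show ?thesis .
qed

lemma gw_mu_mono_neg:
  assumes crit1: "critical_finvar p1" and crit2: "critical_finvar p2"
    and le: "\<forall>t\<in>{0<..<1}. pgf p1 t \<le> pgf p2 t" and "\<alpha> < 0"
  shows "gw_mu p1 \<alpha> \<le> gw_mu p2 \<alpha>"
proof -
  have "ennreal (gw_mu p1 \<alpha>) * ennreal (Gamma (- \<alpha>)) \<le> ennreal (gw_mu p2 \<alpha>) * ennreal (Gamma (- \<alpha>))"
    unfolding gw_mu_neg_mellin[OF crit1 \<open>\<alpha> < 0\<close>] gw_mu_neg_mellin[OF crit2 \<open>\<alpha> < 0\<close>]
  proof (rule nn_integral_mono)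
    fix x :: real
    show "ennreal (indicator {0<..} x * x powr (- \<alpha> - 1) * gw_size_pgf p1 (exp (- x)))
        \<le> ennreal (indicator {0<..} x * x powr (- \<alpha> - 1) * gw_size_pgf p2 (exp (- x)))"
      using gw_size_pgf_compare[OF crit1 crit2 le, of "exp (- x)"]
      by (cases "0 < x") (auto intro!: ennreal_leI mult_left_mono)
  qed
  moreover have "0 < Gamma (- \<alpha>)" using \<open>\<alpha> < 0\<close> by simp
  moreover have "0 \<le> gw_mu p2 \<alpha>"
    using summable_gw_size_prob_powr_nonpos[OF crit2] \<open>\<alpha> < 0\<close> by (simp add: gw_mu_nonneg)
  ultimately show ?thesis
    by (simp add: ennreal_mult_le_mult_iff mult.commute[of _ "ennreal (Gamma _)"])
qed

lemma gw_mu_one_minus_exp_mellin: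
  assumes crit: "critical_finvar p"
  shows "(\<Sum>n. ennreal (gw_size_prob p n * real n powr \<alpha>)) * one_minus_exp_mellin \<alpha>
       = (\<integral>\<^sup>+x. ennreal (indicator {0<..} x * x powr (- \<alpha> - 1) * (1 - gw_size_pgf p (exp (- x)))) \<partial>lborel)"
proof -
  have "(\<Sum>n. ennreal (gw_size_prob p n * real n powr \<alpha>)) * one_minus_exp_mellin \<alpha>
      = (\<integral>\<^sup>+x. ennreal (indicator {0<..} x * x powr (- \<alpha> - 1))
          * (\<Sum>n. ennreal (gw_size_prob p n * (1 - exp (- (real n * x))))) \<partial>lborel)"
    unfolding one_minus_exp_mellin_def
    by (rule suminf_powr_mellin) (simp_all add: gw_size_prob_nonneg)
  also have "\<dots> = (\<integral>\<^sup>+x. ennreal (indicator {0<..} x * x powr (- \<alpha> - 1) * (1 - gw_size_pgf p (exp (- x)))) \<partial>lborel)"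
  proof (rule nn_integral_cong)
    fix x :: real
    show "ennreal (indicator {0<..} x * x powr (- \<alpha> - 1))
          * (\<Sum>n. ennreal (gw_size_prob p n * (1 - exp (- (real n * x)))))
        = ennreal (indicator {0<..} x * x powr (- \<alpha> - 1) * (1 - gw_size_pgf p (exp (- x))))"
      using gw_size_pgf_le_one[of "exp (- x)" p]
      by (cases "0 < x")
         (simp_all add: exp_minus_real_mult gw_size_pgf_complement_ennreal[OF crit] ennreal_mult')
  qed
  finally show ?thesis .
qed

lemma summable_gw_size_prob_powr_pos:
  assumes crit: "critical_finvar p" and \<alpha>: "0 < \<alpha>" "\<alpha> < 1/2"
  shows "summable (\<lambda>n. gw_size_prob p n * real n powr \<alpha>)"
proof (rule summable_suminf_not_top)
  obtain K where "0 \<le> K" and K: "\<And>s. 0 < s \<Longrightarrow> s \<le> 1 \<Longrightarrow> (1 - gw_size_pgf p s) ^ 2 \<le> K * (1 - s)"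
    using gw_size_pgf_deficit_bound[OF crit] by blast
  have "1 - gw_size_pgf p (exp (- x)) \<le> sqrt K * x powr (1/2)" if "0 < x" for x
  proof -
    have "(1 - gw_size_pgf p (exp (- x))) ^ 2 \<le> K * x"
      using K[of "exp (- x)"] one_minus_exp_le[of x] \<open>0 \<le> K\<close> that
      by (auto intro: order_trans mult_left_mono)
    then have "1 - gw_size_pgf p (exp (- x)) \<le> sqrt (K * x)" by (rule real_le_rsqrt)
    then show ?thesis
      using that \<open>0 \<le> K\<close> by (simp add: real_sqrt_mult powr_half_sqrt)
  qed
  then have "(\<integral>\<^sup>+x. ennreal (indicator {0<..} x * x powr (- \<alpha> - 1) * (1 - gw_size_pgf p (exp (- x)))) \<partial>lborel) < \<infinity>"
    using \<alpha> \<open>0 \<le> K\<close> gw_size_pgf_le_one[of _ p] gw_size_pgf_nonneg[of _ p]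
    by (intro nn_integral_powr_finite[where \<theta> = "1/2" and c = "sqrt K"]) auto
  then have "(\<Sum>n. ennreal (gw_size_prob p n * real n powr \<alpha>)) * one_minus_exp_mellin \<alpha> \<noteq> \<top>"
    by (simp add: gw_mu_one_minus_exp_mellin[OF crit])
  then show "(\<Sum>n. ennreal (gw_size_prob p n * real n powr \<alpha>)) \<noteq> \<top>"
    using one_minus_exp_mellin_pos[OF \<alpha>(1)] by (auto simp: ennreal_mult_eq_top_iff)
qed (simp add: gw_size_prob_nonneg)

lemma gw_mu_antimono_pos:
  assumes crit1: "critical_finvar p1" and crit2: "critical_finvar p2"
    and le: "\<forall>t\<in>{0<..<1}. pgf p1 t \<le> pgf p2 t" and \<alpha>: "0 < \<alpha>" "\<alpha> < 1/2"
  shows "gw_mu p2 \<alpha> \<le> gw_mu p1 \<alpha>"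
proof -
  have mellin: "ennreal (gw_mu p \<alpha>) * one_minus_exp_mellin \<alpha>
      = (\<integral>\<^sup>+x. ennreal (indicator {0<..} x * x powr (- \<alpha> - 1) * (1 - gw_size_pgf p (exp (- x)))) \<partial>lborel)"
    if "critical_finvar p" for p
    using gw_mu_one_minus_exp_mellin[OF that, of \<alpha>]
    by (simp add: gw_mu_ennreal summable_gw_size_prob_powr_pos[OF that \<alpha>])
  have "ennreal (gw_mu p2 \<alpha>) * one_minus_exp_mellin \<alpha> \<le> ennreal (gw_mu p1 \<alpha>) * one_minus_exp_mellin \<alpha>"
    unfolding mellin[OF crit1] mellin[OF crit2]
  proof (rule nn_integral_mono)
    fix x :: real
    show "ennreal (indicator {0<..} x * x powr (- \<alpha> - 1) * (1 - gw_size_pgf p2 (exp (- x))))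
        \<le> ennreal (indicator {0<..} x * x powr (- \<alpha> - 1) * (1 - gw_size_pgf p1 (exp (- x))))"
      using gw_size_pgf_compare[OF crit1 crit2 le, of "exp (- x)"]
      by (cases "0 < x") (auto intro!: ennreal_leI mult_left_mono)
  qed
  moreover have "0 < one_minus_exp_mellin \<alpha>" "one_minus_exp_mellin \<alpha> < \<infinity>"
    using \<alpha> one_minus_exp_mellin_pos one_minus_exp_mellin_finite by auto
  moreover have "0 \<le> gw_mu p1 \<alpha>"
    using summable_gw_size_prob_powr_pos[OF crit1 \<alpha>] by (rule gw_mu_nonneg)
  ultimately show ?thesis
    by (simp add: ennreal_mult_le_mult_iff mult.commute[of _ "one_minus_exp_mellin \<alpha>"])
qed

subsection \<open>The logarithmic moment\<close>

lemma exp_minus_one_minus_le: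
  assumes "0 \<le> (y::real)"
  shows "exp y - 1 - y \<le> y ^ 2 * exp y"
proof -
  have "1 - y \<le> exp (- y)" using exp_ge_add_one_self[of "- y"] by simp
  then have "exp y * (1 - y) \<le> exp y * exp (- y)" by (intro mult_left_mono) auto
  then have "exp y - 1 \<le> y * exp y" by (simp add: exp_minus field_simps)
  then have "exp y - 1 - y \<le> y * (exp y - 1)" by (simp add: algebra_simps)
  also have "\<dots> \<le> y * (y * exp y)"
    using \<open>exp y - 1 \<le> y * exp y\<close> assms by (intro mult_left_mono) auto
  finally show ?thesis by (simp add: power2_eq_square mult_ac)
qed

lemma ln_le_powr_diff_quotient:
  assumes "1 \<le> (x::real)" and "0 < \<alpha>"
  shows "ln x \<le> (x powr \<alpha> - 1) / \<alpha>"
  using exp_ge_add_one_self[of "\<alpha> * ln x"] assms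
  by (simp add: powr_def field_simps mult_ac)

text \<open>The error term is dominated by \<open>x\<^sup>1\<^sup>/\<^sup>4\<close> uniformly in \<open>\<alpha> \<le> 1/8\<close>, so that
  \<open>E|T|\<^sup>1\<^sup>/\<^sup>4\<close> controls it.\<close>

lemma powr_diff_quotient_le_ln:
  assumes x: "1 \<le> (x::real)" and \<alpha>: "0 < \<alpha>" "\<alpha> \<le> 1/8"
  shows "(x powr \<alpha> - 1) / \<alpha> \<le> ln x + \<alpha> * (256 * x powr (1/4))"
proof -
  define L where "L = ln x"
  have "0 \<le> L" using x by (simp add: L_def)
  have xa: "x powr \<alpha> = exp (\<alpha> * L)" using x by (simp add: powr_def L_def mult_ac)
  have "(x powr \<alpha> - 1) / \<alpha> - L \<le> \<alpha> * (L ^ 2 * x powr \<alpha>)"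
    using exp_minus_one_minus_le[of "\<alpha> * L"] \<alpha> \<open>0 \<le> L\<close>
    by (simp add: xa field_simps power2_eq_square)
  moreover have "L ^ 2 * x powr \<alpha> \<le> 256 * x powr (1/4)"
  proof -
    have "L \<le> 16 * x powr (1/16)" using ln_powr_bound[OF x, of "1/16"] by (simp add: L_def)
    then have "L ^ 2 \<le> (16 * x powr (1/16)) ^ 2" using \<open>0 \<le> L\<close> by (intro power_mono) auto
    also have "\<dots> = 256 * x powr (1/8)"
      using x by (simp add: power2_eq_square powr_add[symmetric])
    finally have "L ^ 2 * x powr \<alpha> \<le> 256 * x powr (1/8) * x powr (1/8)"
      using x \<alpha> by (intro mult_mono powr_mono) auto
    also have "\<dots> = 256 * x powr (1/4)" using x by (simp add: powr_add[symmetric])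
    finally show ?thesis .
  qed
  then have "\<alpha> * (L ^ 2 * x powr \<alpha>) \<le> \<alpha> * (256 * x powr (1/4))"
    using \<alpha> by (intro mult_left_mono) auto
  ultimately show ?thesis by (simp add: L_def)
qed

lemma summable_gw_size_prob_ln:
  assumes crit: "critical_finvar p"
  shows "summable (\<lambda>n. gw_size_prob p n * ln (real n))"
proof (rule summable_comparison_test)
  have "norm (gw_size_prob p n * ln (real n)) \<le> 4 * (gw_size_prob p n * real n powr (1/4))" for n
  proof (cases "n = 0")
    case False
    then have "0 \<le> ln (real n)" "ln (real n) \<le> 4 * real n powr (1/4)"
      using ln_powr_bound[of "real n" "1/4"] by auto
    moreover have "gw_size_prob p n * ln (real n) \<le> gw_size_prob p n * (4 * real n powr (1/4))"
      using calculation gw_size_prob_nonneg[of p n] by (intro mult_left_mono) auto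
    ultimately show ?thesis using gw_size_prob_nonneg[of p n] by (simp add: abs_mult)
  qed simp
  then show "\<exists>N. \<forall>n\<ge>N. norm (gw_size_prob p n * ln (real n)) \<le> 4 * (gw_size_prob p n * real n powr (1/4))"
    by blast
qed (intro summable_mult summable_gw_size_prob_powr_pos[OF crit]; simp)

lemma gw_mu_diff_quotient_sums:
  assumes crit: "critical_finvar p" and "0 < \<alpha>" "\<alpha> < 1/2"
  shows "(\<lambda>n. gw_size_prob p n * ((real n powr \<alpha> - 1) / \<alpha>)) sums ((gw_mu p \<alpha> - 1) / \<alpha>)"
proof -
  have "(\<lambda>n. (gw_size_prob p n * real n powr \<alpha> - gw_size_prob p n) / \<alpha>) sums ((gw_mu p \<alpha> - 1) / \<alpha>)"
    unfolding gw_mu_def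
    by (intro sums_divide sums_diff summable_sums summable_gw_size_prob_powr_pos
        gw_size_prob_sums_one assms)
  then show ?thesis by (simp add: algebra_simps diff_divide_distrib)
qed

lemma gw_mu'_le_diff_quotient:
  assumes crit: "critical_finvar p" and \<alpha>: "0 < \<alpha>" "\<alpha> < 1/2"
  shows "gw_mu' p \<le> (gw_mu p \<alpha> - 1) / \<alpha>"
  unfolding gw_mu'_def
proof (rule sums_le[OF _ summable_sums[OF summable_gw_size_prob_ln[OF crit]]
      gw_mu_diff_quotient_sums[OF crit \<alpha>]])
  show "gw_size_prob p n * ln (real n) \<le> gw_size_prob p n * ((real n powr \<alpha> - 1) / \<alpha>)" for n
  proof (cases "n = 0")
    case False
    then show ?thesis
      using ln_le_powr_diff_quotient[of "real n" \<alpha>] \<alpha> gw_size_prob_nonneg[of p n]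
      by (intro mult_left_mono) auto
  qed simp
qed

lemma gw_diff_quotient_le_mu':
  assumes crit: "critical_finvar p" and \<alpha>: "0 < \<alpha>" "\<alpha> \<le> 1/8"
  shows "(gw_mu p \<alpha> - 1) / \<alpha> \<le> gw_mu' p + \<alpha> * (256 * gw_mu p (1/4))"
proof (rule sums_le)
  show "(\<lambda>n. gw_size_prob p n * ((real n powr \<alpha> - 1) / \<alpha>)) sums ((gw_mu p \<alpha> - 1) / \<alpha>)"
    using \<alpha> by (intro gw_mu_diff_quotient_sums crit) auto
  have "(\<lambda>n. gw_size_prob p n * ln (real n) + \<alpha> * 256 * (gw_size_prob p n * real n powr (1/4)))
      sums (gw_mu' p + \<alpha> * 256 * gw_mu p (1/4))"
    unfolding gw_mu'_def gw_mu_def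
    by (intro sums_add sums_mult summable_sums summable_gw_size_prob_ln
        summable_gw_size_prob_powr_pos crit) auto
  then show "(\<lambda>n. gw_size_prob p n * ln (real n) + \<alpha> * 256 * (gw_size_prob p n * real n powr (1/4)))
      sums (gw_mu' p + \<alpha> * (256 * gw_mu p (1/4)))"
    by (simp add: mult.assoc)
  show "gw_size_prob p n * ((real n powr \<alpha> - 1) / \<alpha>)
      \<le> gw_size_prob p n * ln (real n) + \<alpha> * 256 * (gw_size_prob p n * real n powr (1/4))" for n
  proof (cases "n = 0")
    case False
    then have "gw_size_prob p n * ((real n powr \<alpha> - 1) / \<alpha>)
        \<le> gw_size_prob p n * (ln (real n) + \<alpha> * (256 * real n powr (1/4)))"
      using powr_diff_quotient_le_ln[of "real n" \<alpha>] \<alpha> gw_size_prob_nonneg[of p n]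
      by (intro mult_left_mono) auto
    then show ?thesis by (simp add: algebra_simps)
  qed simp
qed

lemma gw_mu'_antimono:
  assumes crit1: "critical_finvar p1" and crit2: "critical_finvar p2"
    and le: "\<forall>t\<in>{0<..<1}. pgf p1 t \<le> pgf p2 t"
  shows "gw_mu' p2 \<le> gw_mu' p1"
proof (rule tendsto_lowerbound)
  define M where "M = 256 * gw_mu p1 (1/4)"
  show "((\<lambda>\<alpha>. gw_mu' p1 + \<alpha> * M) \<longlongrightarrow> gw_mu' p1) (at_right 0)"
    by (auto intro!: tendsto_eq_intros)
  have "gw_mu' p2 \<le> gw_mu' p1 + \<alpha> * M" if "0 < \<alpha>" "\<alpha> < 1/8" for \<alpha>
  proof -
    have "gw_mu' p2 \<le> (gw_mu p2 \<alpha> - 1) / \<alpha>"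
      using that by (intro gw_mu'_le_diff_quotient crit2) auto
    also have "\<dots> \<le> (gw_mu p1 \<alpha> - 1) / \<alpha>"
      using gw_mu_antimono_pos[OF crit1 crit2 le, of \<alpha>] that by (simp add: divide_right_mono)
    also have "\<dots> \<le> gw_mu' p1 + \<alpha> * M"
      using gw_diff_quotient_le_mu'[OF crit1, of \<alpha>] that by (simp add: M_def)
    finally show ?thesis .
  qed
  then show "\<forall>\<^sub>F \<alpha> in at_right 0. gw_mu' p2 \<le> gw_mu' p1 + \<alpha> * M"
    by (auto simp: eventually_at_right[of 0 "1/8"] intro!: exI[of _ "1/8"])
qed simp

theorem theorem6p3:
  fixes p1 p2 :: "nat pmf"
  assumes "critical_finvar p1" and "critical_finvar p2"
    and "\<forall>t\<in>{0<..<1}. pgf p1 t \<le> pgf p2 t"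
  shows "(\<forall>\<alpha>::real. \<alpha> < 0 \<longrightarrow> gw_mu p1 \<alpha> \<le> gw_mu p2 \<alpha>)
       \<and> (\<forall>\<alpha>::real. 0 < \<alpha> \<and> \<alpha> < 1/2 \<longrightarrow> gw_mu p1 \<alpha> \<ge> gw_mu p2 \<alpha>)
       \<and> gw_mu' p1 \<ge> gw_mu' p2"
  using gw_mu_mono_neg[OF assms] gw_mu_antimono_pos[OF assms] gw_mu'_antimono[OF assms] by blast

end
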